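(* Let $A=\{a_1,\dots,a_k\}$ be a finite nonempty set and $M\le A^A$ a monoid. The following are equivalent: (i) $M$ is u-closed (equivalently, $M^{*}$ is a clone); (ii) $M^{*}=\mathrm{Pol}\,\Gamma_M$; (iii) $C\subseteq M$ and for every binary $f\in M^{*}$ the unary map $x\mapsto f(x,x)$ belongs to $M$; (iv) $\Gamma_M$ is a generalized quasiorder.
   Context: $C$ is the set of all constant unary maps on $A$. $\Gamma_M:=\{(g a_1,\dots,g a_k)\mid g\in M\}\subseteq A^k$. $\mathrm{Pol}\,\rho$ is the set of all finitary operations on $A$ preserving $\rho$ (componentwise application to tuples of $\rho$ gives a tuple of $\rho$). A translation of an $n$-ary $f$ is a unary map $x\mapsto f(b_1,\dots,b_{i-1},x,b_{i+1},\dots,b_n)$ with fixed $b_j\in A$; $\mathrm{trl}(f)$ is the set of translations of $f$ ($\{f\}$ if $f$ is unary); $M^*:=\{f\mid\mathrm{trl}(f)\subseteq M\}$. The u-closure $\overline M$ is the intersection of all monoids $N$ with $M\subseteq N\le A^A$ such that $N^*$ is a clone; $M$ is u-closed if $\overline M=M$. A relation $\rho\subseteq A^m$ is a generalized quasiorder if it is reflexive and, for every $m\times m$-matrix over $A$ whose rows and columns all lie in $\rho$, its diagonal lies in $\rho$. *)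

theory Defs
  imports Main
begin

text \<open>The base set A is the (finite, nonempty) universe of a type 'a::finite.
  An n-ary operation (n >= 1) is a pair (n, f) with f :: 'a list => 'a, of which only
  the values on lists of length n matter; all sets of operations below are closed under
  changing f outside lists of length n.  An m-ary relation is a set of lists of length m.\<close>

type_synonym 'a op = "nat \<times> ('a list \<Rightarrow> 'a)"

definition is_monoid :: "('a \<Rightarrow> 'a) set \<Rightarrow> bool" where
  "is_monoid M \<longleftrightarrow> id \<in> M \<and> (\<forall>f\<in>M. \<forall>g\<in>M. f \<circ> g \<in> M)"

definition constants :: "('a \<Rightarrow> 'a) set" where
  "constants = {(\<lambda>x. c) | c. True}"

definition trl :: "'a op \<Rightarrow> ('a \<Rightarrow> 'a) set" where
  "trl F = {(\<lambda>x. snd F (bs[i := x])) | bs i. length bs = fst F \<and> i < fst F}"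

definition star :: "('a \<Rightarrow> 'a) set \<Rightarrow> 'a op set" where
  "star M = {F. fst F \<ge> 1 \<and> trl F \<subseteq> M}"

definition is_clone :: "'a op set \<Rightarrow> bool" where
  "is_clone F \<longleftrightarrow>
     (\<forall>G\<in>F. fst G \<ge> 1) \<and>
     (\<forall>n i. 1 \<le> n \<and> i < n \<longrightarrow> (n, \<lambda>xs. xs ! i) \<in> F) \<and>
     (\<forall>n f m gs. (n, f) \<in> F \<and> m \<ge> 1 \<and> length gs = n \<and> (\<forall>g\<in>set gs. (m, g) \<in> F)
        \<longrightarrow> (m, \<lambda>xs. f (map (\<lambda>g. g xs) gs)) \<in> F)"

definition u_closure :: "('a \<Rightarrow> 'a) set \<Rightarrow> ('a \<Rightarrow> 'a) set" where
  "u_closure M = \<Inter> {N. M \<subseteq> N \<and> is_monoid N \<and> is_clone (star N)}"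

definition u_closed :: "('a \<Rightarrow> 'a) set \<Rightarrow> bool" where
  "u_closed M \<longleftrightarrow> u_closure M = M"

definition Gamma :: "'a list \<Rightarrow> ('a \<Rightarrow> 'a) set \<Rightarrow> 'a list set" where
  "Gamma as M = {map g as | g. g \<in> M}"

definition Pol :: "nat \<Rightarrow> 'a list set \<Rightarrow> 'a op set" where
  "Pol m \<rho> = {F. fst F \<ge> 1 \<and>
     (\<forall>rs. length rs = fst F \<and> set rs \<subseteq> \<rho> \<longrightarrow>
        map (\<lambda>j. snd F (map (\<lambda>r. r ! j) rs)) [0..<m] \<in> \<rho>)}"

definition gen_quasiorder :: "nat \<Rightarrow> 'a list set \<Rightarrow> bool" where
  "gen_quasiorder m \<rho> \<longleftrightarrow>
     (\<forall>a. replicate m a \<in> \<rho>) \<and>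
     (\<forall>X :: nat \<Rightarrow> nat \<Rightarrow> 'a.
        (\<forall>i<m. map (\<lambda>j. X i j) [0..<m] \<in> \<rho>) \<and> (\<forall>j<m. map (\<lambda>i. X i j) [0..<m] \<in> \<rho>)
        \<longrightarrow> map (\<lambda>i. X i i) [0..<m] \<in> \<rho>)"

end

theory Submission
  imports Defs
begin

(* Everything rests on a superposition property. Suppose the monoid M contains x |-> f(x, x)
   whenever all translations of the binary operation f lie in M. Then x |-> f(u_1 x, ..., u_n x)
   lies in M for every f in M* and u_1, ..., u_n in M: by induction on n it is the diagonal of
   (y, z) |-> f(u_1 y, u_2 z, ..., u_n z), whose translations lie in M by the monoid property and
   the induction hypothesis. A translation of a composite of operations of M* is such a
   superposition, so M* is a clone once C is contained in M. As the tuples of Gamma_M are the maps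
   of M listed along a_1, ..., a_k, superposition also gives M* <= Pol Gamma_M; conversely a
   translation of a polymorphism is its value on the identity tuple and constant tuples. Finally a
   k x k matrix over A is a binary operation on A, and its rows and columns lie in Gamma_M iff its
   translations lie in M, so (iv) is (iii) restated. *)

lemma starI:
  assumes "1 \<le> n" and "\<And>bs i. length bs = n \<Longrightarrow> i < n \<Longrightarrow> (\<lambda>x. f (bs[i := x])) \<in> M"
  shows "(n, f) \<in> star M"
  using assms unfolding star_def trl_def by auto

lemma star_arity_pos: "(n, f) \<in> star M \<Longrightarrow> 1 \<le> n"
  unfolding star_def by simp

lemma star_translation_mem:
  "(n, f) \<in> star M \<Longrightarrow> length bs = n \<Longrightarrow> i < n \<Longrightarrow> (\<lambda>x. f (bs[i := x])) \<in> M"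
  unfolding star_def trl_def by auto

lemma star_unary_iff: "(1, f) \<in> star M \<longleftrightarrow> (\<lambda>x. f [x]) \<in> M"
proof
  assume "(1, f) \<in> star M"
  from star_translation_mem[OF this, of "[undefined]" 0] show "(\<lambda>x. f [x]) \<in> M" by simp
next
  assume "(\<lambda>x. f [x]) \<in> M"
  then show "(1, f) \<in> star M"
    by (intro starI) (auto simp: length_Suc_conv)
qed

lemma star_binary_iff:
  "(2, f) \<in> star M \<longleftrightarrow> (\<forall>a. (\<lambda>x. f [a, x]) \<in> M) \<and> (\<forall>b. (\<lambda>x. f [x, b]) \<in> M)"
proof
  assume f: "(2, f) \<in> star M"
  show "(\<forall>a. (\<lambda>x. f [a, x]) \<in> M) \<and> (\<forall>b. (\<lambda>x. f [x, b]) \<in> M)"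
    using star_translation_mem[OF f, of "[_, _]" 1] star_translation_mem[OF f, of "[_, _]" 0]
    by simp
next
  assume "(\<forall>a. (\<lambda>x. f [a, x]) \<in> M) \<and> (\<forall>b. (\<lambda>x. f [x, b]) \<in> M)"
  then show "(2, f) \<in> star M"
    by (intro starI) (auto simp: numeral_2_eq_2 length_Suc_conv less_Suc_eq)
qed

lemma star_fix_first_arg:
  assumes f: "(Suc n, f) \<in> star M" and n: "1 \<le> n"
  shows "(n, \<lambda>xs. f (c # xs)) \<in> star M"
proof (rule starI[OF n])
  fix bs :: "'a list" and i assume "length bs = n" "i < n"
  with star_translation_mem[OF f, of "c # bs" "Suc i"]
  show "(\<lambda>x. f (c # bs[i := x])) \<in> M" by simp
qed

definition diagonal_closed :: "('a \<Rightarrow> 'a) set \<Rightarrow> bool" where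
  "diagonal_closed M \<longleftrightarrow>
     (\<forall>F. (\<forall>a. F a \<in> M) \<and> (\<forall>b. (\<lambda>a. F a b) \<in> M) \<longrightarrow> (\<lambda>a. F a a) \<in> M)"

lemma diagonal_closedD:
  "diagonal_closed M \<Longrightarrow> (\<And>a. F a \<in> M) \<Longrightarrow> (\<And>b. (\<lambda>a. F a b) \<in> M) \<Longrightarrow> (\<lambda>a. F a a) \<in> M"
  unfolding diagonal_closed_def by blast

lemma diagonal_closed_iff_star:
  "diagonal_closed M \<longleftrightarrow> (\<forall>f. (2, f) \<in> star M \<longrightarrow> (\<lambda>x. f [x, x]) \<in> M)"
proof (intro iffI allI impI)
  fix f assume diag: "diagonal_closed M" and "(2, f) \<in> star M"
  then have "(\<forall>a. (\<lambda>b. f [a, b]) \<in> M) \<and> (\<forall>b. (\<lambda>a. f [a, b]) \<in> M)"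
    unfolding star_binary_iff by blast
  then show "(\<lambda>x. f [x, x]) \<in> M"
    using diagonal_closedD[OF diag, of "\<lambda>a b. f [a, b]"] by simp
next
  assume bin: "\<forall>f. (2, f) \<in> star M \<longrightarrow> (\<lambda>x. f [x, x]) \<in> M"
  show "diagonal_closed M"
    unfolding diagonal_closed_def
  proof (intro allI impI)
    fix F :: "'a \<Rightarrow> 'a \<Rightarrow> 'a" assume "(\<forall>a. F a \<in> M) \<and> (\<forall>b. (\<lambda>a. F a b) \<in> M)"
    then have "(2, \<lambda>xs. F (xs ! 0) (xs ! 1)) \<in> star M"
      unfolding star_binary_iff by simp
    from bin[rule_format, OF this] show "(\<lambda>a. F a a) \<in> M" by simp
  qed
qed

lemma is_monoid_comp: "is_monoid M \<Longrightarrow> f \<in> M \<Longrightarrow> g \<in> M \<Longrightarrow> f \<circ> g \<in> M"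
  unfolding is_monoid_def by blast

lemma star_superposition:
  assumes mon: "is_monoid M" and diag: "diagonal_closed M"
  shows "(n, f) \<in> star M \<Longrightarrow> length us = n \<Longrightarrow> set us \<subseteq> M \<Longrightarrow>
    (\<lambda>x. f (map (\<lambda>u. u x) us)) \<in> M"
proof (induction us arbitrary: n f)
  case Nil
  then show ?case using star_arity_pos by fastforce
next
  case (Cons u us)
  then have u: "u \<in> M" and f: "(Suc (length us), f) \<in> star M" by auto
  have col: "(\<lambda>y. f (u y # map (\<lambda>v. v z) us)) \<in> M" for z
  proof -
    have "(\<lambda>x. f (x # map (\<lambda>v. v z) us)) \<in> M"
      using star_translation_mem[OF f, of "undefined # map (\<lambda>v. v z) us" 0] by simp
    from is_monoid_comp[OF mon this u] show ?thesis by (simp add: comp_def)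
  qed
  show ?case
  proof (cases "us = []")
    case True
    with col show ?thesis by simp
  next
    case False
    then have "1 \<le> length us" by (simp add: Suc_le_eq)
    have row: "(\<lambda>z. f (u y # map (\<lambda>v. v z) us)) \<in> M" for y
      using Cons.IH[OF star_fix_first_arg[OF f \<open>1 \<le> length us\<close>]] Cons.prems by simp
    from diagonal_closedD[OF diag row col] show ?thesis by simp
  qed
qed

lemma is_clone_proj: "is_clone F \<Longrightarrow> 1 \<le> n \<Longrightarrow> i < n \<Longrightarrow> (n, \<lambda>xs. xs ! i) \<in> F"
  unfolding is_clone_def by simp

lemma is_clone_comp:
  "is_clone F \<Longrightarrow> (n, f) \<in> F \<Longrightarrow> 1 \<le> m \<Longrightarrow> length gs = n \<Longrightarrow> \<forall>g\<in>set gs. (m, g) \<in> F \<Longrightarrow>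
    (m, \<lambda>xs. f (map (\<lambda>g. g xs) gs)) \<in> F"
  unfolding is_clone_def by simp

lemma is_clone_Inter:
  assumes "S \<noteq> {}" and "\<And>F. F \<in> S \<Longrightarrow> is_clone F"
  shows "is_clone (\<Inter>S)"
  using assms unfolding is_clone_def by (simp, blast)

lemma star_Inter: "S \<noteq> {} \<Longrightarrow> star (\<Inter>S) = \<Inter>(star ` S)"
  unfolding star_def by auto

lemma u_closed_iff_is_clone_star:
  assumes mon: "is_monoid M"
  shows "u_closed M \<longleftrightarrow> is_clone (star M)"
proof
  let ?S = "{N. M \<subseteq> N \<and> is_monoid N \<and> is_clone (star N)}"
  have "UNIV \<in> ?S"
    unfolding is_monoid_def is_clone_def star_def by auto
  then have "?S \<noteq> {}" by blast
  then have "is_clone (\<Inter>(star ` ?S))"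
    by (intro is_clone_Inter) auto
  then have "is_clone (star (\<Inter>?S))"
    by (simp only: star_Inter[OF \<open>?S \<noteq> {}\<close>])
  moreover assume "u_closed M"
  then have "\<Inter>?S = M" unfolding u_closed_def u_closure_def .
  ultimately show "is_clone (star M)" by simp
next
  assume "is_clone (star M)"
  with mon show "u_closed M" unfolding u_closed_def u_closure_def by blast
qed

lemma is_clone_starI:
  assumes mon: "is_monoid M" and C: "constants \<subseteq> M" and diag: "diagonal_closed M"
  shows "is_clone (star M)"
  unfolding is_clone_def
proof (intro conjI allI impI ballI)
  fix G assume "G \<in> star M"
  then show "1 \<le> fst G" by (simp add: star_def)
next
  fix n i :: nat assume "1 \<le> n \<and> i < n"
  then show "(n, \<lambda>xs. xs ! i) \<in> star M"
  proof (intro starI)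
    fix bs :: "'a list" and j assume "length bs = n" "j < n"
    then have "(\<lambda>x. bs[j := x] ! i) = (if j = i then id else (\<lambda>_. bs ! i))"
      by (auto simp: fun_eq_iff)
    with mon C show "(\<lambda>x. bs[j := x] ! i) \<in> M"
      by (auto simp: is_monoid_def constants_def)
  qed simp
next
  fix n f m gs
  assume h: "(n, f) \<in> star M \<and> 1 \<le> m \<and> length gs = n \<and> (\<forall>g\<in>set gs. (m, g) \<in> star M)"
  then show "(m, \<lambda>xs. f (map (\<lambda>g. g xs) gs)) \<in> star M"
  proof (intro starI)
    fix bs :: "'a list" and i assume "length bs = m" "i < m"
    with h have "set (map (\<lambda>g y. g (bs[i := y])) gs) \<subseteq> M"
      by (auto intro: star_translation_mem)
    with h have "(\<lambda>x. f (map (\<lambda>u. u x) (map (\<lambda>g y. g (bs[i := y])) gs))) \<in> M"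
      by (intro star_superposition[OF mon diag]) auto
    then show "(\<lambda>x. f (map (\<lambda>g. g (bs[i := x])) gs)) \<in> M" by (simp add: comp_def)
  qed simp
qed

lemma constants_subset_if_is_clone_star:
  assumes cl: "is_clone (star M)"
  shows "constants \<subseteq> M"
proof
  fix t :: "'a \<Rightarrow> 'a" assume "t \<in> constants"
  then obtain c where c: "t = (\<lambda>_. c)" by (auto simp: constants_def)
  have "(2, \<lambda>xs. xs ! 0) \<in> star M" using is_clone_proj[OF cl] by simp
  from star_translation_mem[OF this, of "[c, c]" 1] show "t \<in> M" by (simp add: c)
qed

lemma diagonal_closed_if_is_clone_star:
  assumes cl: "is_clone (star M)"
  shows "diagonal_closed M"
  unfolding diagonal_closed_iff_star
proof (intro allI impI)
  fix f assume f: "(2, f) \<in> star M"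
  have "(1, \<lambda>xs. xs ! 0) \<in> star M" using is_clone_proj[OF cl] by simp
  then have "(1, \<lambda>xs. f (map (\<lambda>g. g xs) [\<lambda>xs. xs ! 0, \<lambda>xs. xs ! 0])) \<in> star M"
    by (intro is_clone_comp[OF cl f]) auto
  then show "(\<lambda>x. f [x, x]) \<in> M" by (simp only: star_unary_iff) simp
qed

lemma Gamma_map_iff: "set as = UNIV \<Longrightarrow> map g as \<in> Gamma as M \<longleftrightarrow> g \<in> M"
  unfolding Gamma_def by (auto simp flip: fun_eq_iff)

lemma set_subset_Gamma_iff:
  "set rs \<subseteq> Gamma as M \<longleftrightarrow> (\<exists>us. set us \<subseteq> M \<and> rs = map (\<lambda>u. map u as) us)"
proof
  show "set rs \<subseteq> Gamma as M \<Longrightarrow> \<exists>us. set us \<subseteq> M \<and> rs = map (\<lambda>u. map u as) us"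
  proof (induction rs)
    case (Cons r rs)
    then obtain g us where "g \<in> M" "r = map g as" "set us \<subseteq> M" "rs = map (\<lambda>u. map u as) us"
      by (auto simp: Gamma_def)
    then show ?case by (intro exI[of _ "g # us"]) simp
  qed simp
qed (fastforce simp: Gamma_def simp del: map_eq_conv)

lemma map_columns_map_rows:
  "map (\<lambda>j. h (map (\<lambda>r. r ! j) (map (\<lambda>u. map u as) us))) [0..<length as]
     = map (\<lambda>x. h (map (\<lambda>u. u x) us)) as"
  by (rule nth_equalityI) (simp_all add: comp_def)

lemma PolI:
  "1 \<le> n \<Longrightarrow>
   (\<And>rs. length rs = n \<Longrightarrow> set rs \<subseteq> \<rho> \<Longrightarrow> map (\<lambda>j. f (map (\<lambda>r. r ! j) rs)) [0..<m] \<in> \<rho>) \<Longrightarrow>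
   (n, f) \<in> Pol m \<rho>"
  unfolding Pol_def by auto

lemma PolD:
  "(n, f) \<in> Pol m \<rho> \<Longrightarrow> length rs = n \<Longrightarrow> set rs \<subseteq> \<rho> \<Longrightarrow>
    map (\<lambda>j. f (map (\<lambda>r. r ! j) rs)) [0..<m] \<in> \<rho>"
  unfolding Pol_def by auto

lemma is_clone_Pol:
  assumes len: "\<And>r. r \<in> \<rho> \<Longrightarrow> length r = m"
  shows "is_clone (Pol m \<rho>)"
  unfolding is_clone_def
proof (intro conjI allI impI ballI)
  fix G assume "G \<in> Pol m \<rho>"
  then show "1 \<le> fst G" by (simp add: Pol_def)
next
  fix n i :: nat assume h: "1 \<le> n \<and> i < n"
  show "(n, \<lambda>xs. xs ! i) \<in> Pol m \<rho>"
  proof (rule PolI)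
    fix rs :: "'a list list" assume rs: "length rs = n" "set rs \<subseteq> \<rho>"
    with h have "rs ! i \<in> \<rho>" by auto
    moreover from this have "map (\<lambda>j. map (\<lambda>r. r ! j) rs ! i) [0..<m] = rs ! i"
      using rs h len by (intro nth_equalityI) auto
    ultimately show "map (\<lambda>j. map (\<lambda>r. r ! j) rs ! i) [0..<m] \<in> \<rho>"
      by simp
  qed (use h in simp)
next
  fix n f k gs
  assume h: "(n, f) \<in> Pol m \<rho> \<and> 1 \<le> k \<and> length gs = n \<and> (\<forall>g\<in>set gs. (k, g) \<in> Pol m \<rho>)"
  show "(k, \<lambda>xs. f (map (\<lambda>g. g xs) gs)) \<in> Pol m \<rho>"
  proof (rule PolI)
    fix rs :: "'a list list" assume rs: "length rs = k" "set rs \<subseteq> \<rho>"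
    define ss where "ss = map (\<lambda>g. map (\<lambda>j. g (map (\<lambda>r. r ! j) rs)) [0..<m]) gs"
    from h have f: "(n, f) \<in> Pol m \<rho>" by blast
    have "length ss = n"
      using h by (simp add: ss_def)
    moreover have "set ss \<subseteq> \<rho>"
      using h rs by (auto simp: ss_def intro: PolD)
    ultimately have "map (\<lambda>j. f (map (\<lambda>s. s ! j) ss)) [0..<m] \<in> \<rho>"
      by (rule PolD[OF f])
    moreover have "map (\<lambda>j. f (map (\<lambda>s. s ! j) ss)) [0..<m] =
        map (\<lambda>j. f (map (\<lambda>g. g (map (\<lambda>r. r ! j) rs)) gs)) [0..<m]"
      by (rule map_cong) (auto simp: ss_def comp_def)
    ultimately show "map (\<lambda>j. f (map (\<lambda>g. g (map (\<lambda>r. r ! j) rs)) gs)) [0..<m] \<in> \<rho>"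
      by simp
  qed (use h in simp)
qed

lemma star_subset_Pol:
  assumes mon: "is_monoid M" and diag: "diagonal_closed M"
  shows "star M \<subseteq> Pol (length as) (Gamma as M)"
proof (intro subsetI, unfold split_paired_all)
  fix n f assume F: "(n, f) \<in> star M"
  show "(n, f) \<in> Pol (length as) (Gamma as M)"
  proof (rule PolI)
    fix rs :: "'a list list" assume rs: "length rs = n" "set rs \<subseteq> Gamma as M"
    then obtain us where us: "set us \<subseteq> M" "rs = map (\<lambda>u. map u as) us"
      by (auto simp: set_subset_Gamma_iff)
    with rs F have "(\<lambda>x. f (map (\<lambda>u. u x) us)) \<in> M"
      by (intro star_superposition[OF mon diag]) auto
    then have "map (\<lambda>x. f (map (\<lambda>u. u x) us)) as \<in> Gamma as M"
      unfolding Gamma_def by blast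
    then show "map (\<lambda>j. f (map (\<lambda>r. r ! j) rs)) [0..<length as] \<in> Gamma as M"
      unfolding us(2) map_columns_map_rows .
  qed (rule star_arity_pos[OF F])
qed

lemma Pol_subset_star:
  assumes mon: "is_monoid M" and C: "constants \<subseteq> M" and U: "set as = UNIV"
  shows "Pol (length as) (Gamma as M) \<subseteq> star M"
proof (intro subsetI, unfold split_paired_all)
  fix n f assume F: "(n, f) \<in> Pol (length as) (Gamma as M)"
  show "(n, f) \<in> star M"
  proof (rule starI)
    fix bs :: "'a list" and i assume bs: "length bs = n" "i < n"
    define us where "us = map (\<lambda>k. if k = i then id else (\<lambda>_. bs ! k)) [0..<n]"
    have "set us \<subseteq> M"
      using mon C by (auto simp: us_def is_monoid_def constants_def)
    then have "set (map (\<lambda>u. map u as) us) \<subseteq> Gamma as M"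
      using set_subset_Gamma_iff by blast
    with F have "map (\<lambda>j. f (map (\<lambda>r. r ! j) (map (\<lambda>u. map u as) us))) [0..<length as]
        \<in> Gamma as M"
      by (intro PolD) (auto simp: us_def)
    then have "map (\<lambda>x. f (map (\<lambda>u. u x) us)) as \<in> Gamma as M"
      by (simp only: map_columns_map_rows)
    moreover have "map (\<lambda>u. u x) us = bs[i := x]" for x
      using bs by (intro nth_equalityI) (auto simp: us_def nth_list_update)
    ultimately show "(\<lambda>x. f (bs[i := x])) \<in> M"
      by (simp add: Gamma_map_iff[OF U])
  qed (use F in \<open>simp add: Pol_def\<close>)
qed

lemma enumeration_index:
  assumes "distinct as" "set as = UNIV"
  obtains idx where "\<And>x. idx x < length as" "\<And>x. as ! idx x = x"
    "\<And>i. i < length as \<Longrightarrow> idx (as ! i) = i"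
proof -
  have bij: "bij_betw ((!) as) {..<length as} UNIV"
    using bij_betw_nth assms by blast
  show thesis
  proof
    show "the_inv_into {..<length as} ((!) as) x < length as" for x
      using bij_betw_the_inv_into[OF bij] bij_betwE by blast
    show "as ! the_inv_into {..<length as} ((!) as) x = x" for x
      using bij f_the_inv_into_f_bij_betw by fastforce
    show "the_inv_into {..<length as} ((!) as) (as ! i) = i" if "i < length as" for i
      using bij that by (simp add: bij_betw_def the_inv_into_f_f)
  qed
qed

lemma gen_quasiorder_Gamma_iff:
  assumes D: "distinct as" and U: "set as = UNIV"
  shows "gen_quasiorder (length as) (Gamma as M) \<longleftrightarrow> constants \<subseteq> M \<and> diagonal_closed M"
proof -
  let ?m = "length as"
  obtain idx where idx: "\<And>x. idx x < ?m" "\<And>x. as ! idx x = x" "\<And>i. i < ?m \<Longrightarrow> idx (as ! i) = i"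
    using enumeration_index[OF D U] by blast
  have upt_as: "map h [0..<?m] = map (\<lambda>x. h (idx x)) as" for h :: "nat \<Rightarrow> 'a"
    by (rule nth_equalityI) (simp_all add: idx)
  have refl: "(\<forall>a. replicate ?m a \<in> Gamma as M) \<longleftrightarrow> constants \<subseteq> M"
    by (auto simp: constants_def Gamma_map_iff[OF U] simp flip: map_replicate_const)
  \<comment> \<open>via idx, a matrix X is the binary operation (a, b) |-> X (idx a) (idx b)\<close>
  have matrix: "(\<forall>X :: nat \<Rightarrow> nat \<Rightarrow> 'a.
        (\<forall>i<?m. map (\<lambda>j. X i j) [0..<?m] \<in> Gamma as M) \<and>
        (\<forall>j<?m. map (\<lambda>i. X i j) [0..<?m] \<in> Gamma as M)
        \<longrightarrow> map (\<lambda>i. X i i) [0..<?m] \<in> Gamma as M)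
      \<longleftrightarrow> diagonal_closed M"
    unfolding diagonal_closed_def
  proof (intro iffI allI impI)
    fix F :: "'a \<Rightarrow> 'a \<Rightarrow> 'a"
    assume "\<forall>X. (\<forall>i<?m. map (\<lambda>j. X i j) [0..<?m] \<in> Gamma as M) \<and>
        (\<forall>j<?m. map (\<lambda>i. X i j) [0..<?m] \<in> Gamma as M)
        \<longrightarrow> map (\<lambda>i. X i i) [0..<?m] \<in> Gamma as M"
      and "(\<forall>a. F a \<in> M) \<and> (\<forall>b. (\<lambda>a. F a b) \<in> M)"
    then show "(\<lambda>a. F a a) \<in> M"
      by (auto simp: upt_as idx Gamma_map_iff[OF U] elim!: allE[of _ "\<lambda>i j. F (as ! i) (as ! j)"])
  next
    fix X :: "nat \<Rightarrow> nat \<Rightarrow> 'a"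
    assume "\<forall>F. (\<forall>a. F a \<in> M) \<and> (\<forall>b. (\<lambda>a. F a b) \<in> M) \<longrightarrow> (\<lambda>a. F a a) \<in> M"
      and "(\<forall>i<?m. map (\<lambda>j. X i j) [0..<?m] \<in> Gamma as M) \<and>
        (\<forall>j<?m. map (\<lambda>i. X i j) [0..<?m] \<in> Gamma as M)"
    then show "map (\<lambda>i. X i i) [0..<?m] \<in> Gamma as M"
      by (auto simp: upt_as idx Gamma_map_iff[OF U] elim!: allE[of _ "\<lambda>a b. X (idx a) (idx b)"])
  qed
  show ?thesis
    unfolding gen_quasiorder_def refl matrix ..
qed

theorem proposition3p9:
  fixes M :: "('a::finite \<Rightarrow> 'a) set" and as :: "'a list"
  assumes enum: "distinct as" "set as = UNIV"
    and mon: "is_monoid M"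
  shows "(u_closed M \<longleftrightarrow> is_clone (star M))
       \<and> (u_closed M \<longleftrightarrow> star M = Pol (length as) (Gamma as M))
       \<and> (u_closed M \<longleftrightarrow> constants \<subseteq> M \<and>
             (\<forall>f. (2, f) \<in> star M \<longrightarrow> (\<lambda>x. f [x, x]) \<in> M))
       \<and> (u_closed M \<longleftrightarrow> gen_quasiorder (length as) (Gamma as M))"
proof -
  have i: "u_closed M \<longleftrightarrow> is_clone (star M)"
    using u_closed_iff_is_clone_star[OF mon] .
  have iii: "is_clone (star M) \<longleftrightarrow> constants \<subseteq> M \<and> diagonal_closed M"
    using is_clone_starI[OF mon] constants_subset_if_is_clone_star diagonal_closed_if_is_clone_star
    by blast
  have ii: "is_clone (star M) \<longleftrightarrow> star M = Pol (length as) (Gamma as M)"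
  proof
    assume "is_clone (star M)"
    with iii show "star M = Pol (length as) (Gamma as M)"
      using star_subset_Pol[OF mon] Pol_subset_star[OF mon _ enum(2)] by blast
  next
    have "\<And>r. r \<in> Gamma as M \<Longrightarrow> length r = length as"
      by (auto simp: Gamma_def)
    then show "star M = Pol (length as) (Gamma as M) \<Longrightarrow> is_clone (star M)"
      using is_clone_Pol by metis
  qed
  have iv: "gen_quasiorder (length as) (Gamma as M) \<longleftrightarrow> constants \<subseteq> M \<and> diagonal_closed M"
    using gen_quasiorder_Gamma_iff[OF enum] .
  show ?thesis
    using i ii iii iv by (simp add: diagonal_closed_iff_star)
qed

end
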